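(* Let $\psi : [0,\infty) \to [0,\infty)$ be a measurable function such that $0 < 1/c_d := \int_0^\infty u^d \psi(u)\,{\rm d}u < \infty$ for all integers $d \ge 1$. For each $d \ge 1$, let $X_d$ be a random vector in $\mathbb{R}^{d+1}$ with density $x \mapsto c_d\,\psi(\|x\|)$, and let $U_d = \|X_d\|$, which has density $u \mapsto c_d u^d \psi(u)$ on $[0,\infty)$. Define $$u_* = \sup\Big\{u : \int_{u-\varepsilon}^u \psi(v)\,{\rm d}v > 0 \text{ for all } \varepsilon > 0\Big\},$$ and assume $u_* < \infty$. Assume in addition that $\psi$ is bounded and that $\psi(u) \sim a (u_* - u)^b$ as $u \nearrow u_*$, for some constants $a > 0$ and $b > -1$. Then $d\,(u_* - U_d)$ converges in distribution, as $d \to \infty$, to the Gamma distribution with shape parameter $b+1$ and rate $1/u_*$.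
   Context: $f(u) \sim g(u)$ as $u \nearrow u_*$ means $f(u)/g(u) \to 1$. The Gamma distribution with shape $k$ and rate $\lambda$ has density proportional to $x^{k-1}e^{-\lambda x}$ on $(0,\infty)$. *)

theory Defs
  imports "HOL-Probability.Probability" "HOL-Library.Landau_Symbols"
begin

text \<open>psi is a function on [0,oo); we represent it as a real function and only
  ever use its values on {0..}.\<close>

definition psi_moment :: "(real \<Rightarrow> real) \<Rightarrow> nat \<Rightarrow> ennreal" where
  "psi_moment \<psi> d = (\<integral>\<^sup>+ u. ennreal (indicator {0..} u * u ^ d * \<psi> u) \<partial>lborel)"

definition c_const :: "(real \<Rightarrow> real) \<Rightarrow> nat \<Rightarrow> real" where
  "c_const \<psi> d = 1 / enn2real (psi_moment \<psi> d)"

definition U_density :: "(real \<Rightarrow> real) \<Rightarrow> nat \<Rightarrow> real \<Rightarrow> real" where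
  "U_density \<psi> d u = indicator {0..} u * c_const \<psi> d * u ^ d * \<psi> u"

definition ustar_set :: "(real \<Rightarrow> real) \<Rightarrow> real set" where
  "ustar_set \<psi> = {u. \<forall>\<epsilon>>0. (\<integral>\<^sup>+ v. ennreal (indicator ({u - \<epsilon>..u} \<inter> {0..}) v * \<psi> v) \<partial>lborel) > 0}"

definition ustar :: "(real \<Rightarrow> real) \<Rightarrow> real" where
  "ustar \<psi> = Sup (ustar_set \<psi>)"

definition gamma_density :: "real \<Rightarrow> real \<Rightarrow> real \<Rightarrow> real" where
  "gamma_density k l x = (if x > 0 then l powr k * x powr (k - 1) * exp (- l * x) / Gamma k else 0)"

definition gamma_measure :: "real \<Rightarrow> real \<Rightarrow> real measure" where
  "gamma_measure k l = density lborel (\<lambda>x. ennreal (gamma_density k l x))"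

end

theory Submission
  imports Defs
begin

text \<open>Extend \<open>\<psi>\<close> by zero to the whole line.  Then \<open>\<psi> = 0\<close> almost everywhere beyond \<open>u\<^sub>*\<close>: otherwise,
  since the mass of the bounded function \<open>\<psi>\<close> on \<open>(u\<^sub>*, t]\<close> is continuous and nondecreasing in \<open>t\<close>,
  there is a first point \<open>u > u\<^sub>*\<close> at which it starts to increase, and that point lies in the set
  whose supremum is \<open>u\<^sub>*\<close>.  Substituting \<open>u = u\<^sub>* - t/d\<close>, the law of \<open>d (u\<^sub>* - U\<^sub>d)\<close> therefore has
  a density on \<open>(0, \<infinity>)\<close> proportional to \<open>d\<^sup>b (1 - t/(d u\<^sub>*))\<^sup>d \<psi>(u\<^sub>* - t/d)\<close>.  By the asymptotics
  of \<open>\<psi>\<close> at \<open>u\<^sub>*\<close> this tends pointwise to \<open>a t\<^sup>b exp(-t/u\<^sub>*)\<close>, and the bound on \<open>\<psi>\<close> together with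
  \<open>(1 - x/d)\<^sup>d \<le> exp(-x)\<close> gives a majorant \<open>C t\<^sup>b exp(-t/u\<^sub>*)\<close>.  Dominated convergence then
  yields convergence of the distribution functions at every point.\<close>

lemma continuous_mono_obtain_left_strict_increase:
  fixes F :: "real \<Rightarrow> real"
  assumes "s \<le> T" and cont: "continuous_on {s..T} F" and mono: "mono_on {s..T} F" and less: "F s < F T"
  obtains u where "s < u" "u \<le> T" "\<And>w. s \<le> w \<Longrightarrow> w < u \<Longrightarrow> F w < F u"
proof -
  define L where "L = {v \<in> {s..T}. F v = F T}"
  define u where "u = Inf L"
  have "closed L"
    unfolding L_def by (rule continuous_closed_preimage_constant[OF cont]) simp
  moreover have "T \<in> L" "bdd_below L"
    using \<open>s \<le> T\<close> by (auto simp: L_def bdd_below_def)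
  ultimately have "u \<in> L"
    unfolding u_def by (intro closed_contains_Inf) auto
  then have Fu: "F u = F T" and "s \<le> u" "u \<le> T"
    by (auto simp: L_def)
  moreover have "s \<noteq> u"
    using Fu less by auto
  moreover have "F w < F u" if "s \<le> w" "w < u" for w
  proof -
    have "w \<notin> L"
      using that \<open>bdd_below L\<close> cInf_lower[of w L] by (auto simp: u_def)
    moreover have "F w \<le> F u"
      using that \<open>u \<le> T\<close> by (intro mono_onD[OF mono]) auto
    ultimately show ?thesis
      using that \<open>u \<le> T\<close> Fu by (auto simp: L_def)
  qed
  ultimately show ?thesis
    using that[of u] by fastforce
qed

lemma emeasure_density_Ioc_le:
  fixes p :: "real \<Rightarrow> real"
  assumes [measurable]: "p \<in> borel_measurable borel" and "\<And>u. p u \<le> K" "0 \<le> K" "a \<le> b"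
  shows "emeasure (density lborel p) {a<..b} \<le> ennreal (K * (b - a))"
proof -
  have "emeasure (density lborel p) {a<..b} = (\<integral>\<^sup>+v. ennreal (p v) * indicator {a<..b} v \<partial>lborel)"
    by (rule emeasure_density) auto
  also have "\<dots> \<le> (\<integral>\<^sup>+v. ennreal K * indicator {a<..b} v \<partial>lborel)"
    using assms by (intro nn_integral_mono) (auto simp: indicator_def ennreal_leI)
  also have "\<dots> = ennreal (K * (b - a))"
    using assms by (simp add: nn_integral_cmult_indicator ennreal_mult)
  finally show ?thesis .
qed

lemma measure_density_Ioc_add_le:
  fixes p :: "real \<Rightarrow> real"
  assumes [measurable]: "p \<in> borel_measurable borel" and "\<And>u. p u \<le> K" "0 \<le> K" "s \<le> v" "v \<le> t"
  shows "measure (density lborel p) {s<..t} = measure (density lborel p) {s<..v} + measure (density lborel p) {v<..t}"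
    and "measure (density lborel p) {v<..t} \<le> K * (t - v)"
proof -
  have "{s<..t} = {s<..v} \<union> {v<..t}"
    using assms by auto
  moreover have "emeasure (density lborel p) {s<..v} \<noteq> \<infinity>" "emeasure (density lborel p) {v<..t} \<noteq> \<infinity>"
    using neq_top_trans[OF ennreal_neq_top emeasure_density_Ioc_le[OF assms(1-3) \<open>s \<le> v\<close>]]
      neq_top_trans[OF ennreal_neq_top emeasure_density_Ioc_le[OF assms(1-3) \<open>v \<le> t\<close>]]
    by auto
  ultimately show "measure (density lborel p) {s<..t} = measure (density lborel p) {s<..v} + measure (density lborel p) {v<..t}"
    by (simp add: measure_Union)
  show "measure (density lborel p) {v<..t} \<le> K * (t - v)"
    using emeasure_density_Ioc_le[OF assms(1-3) \<open>v \<le> t\<close>] assms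
    by (simp add: measure_def enn2real_leI)
qed

lemma continuous_on_measure_density_Ioc:
  fixes p :: "real \<Rightarrow> real"
  assumes [measurable]: "p \<in> borel_measurable borel" and "\<And>u. p u \<le> K" "0 \<le> K"
  shows "continuous_on {s..} (\<lambda>t. measure (density lborel p) {s<..t})"
proof -
  have "lipschitz_on K {s..} (\<lambda>t. measure (density lborel p) {s<..t})"
  proof (rule lipschitz_onI)
    show "dist (measure (density lborel p) {s<..x}) (measure (density lborel p) {s<..y}) \<le> K * dist x y"
      if "x \<in> {s..}" "y \<in> {s..}" for x y
      using measure_density_Ioc_add_le[OF assms, of s x y] measure_density_Ioc_add_le[OF assms, of s y x] that
      by (cases "x \<le> y") (auto simp: dist_real_def)
  qed fact
  then show ?thesis
    by (rule lipschitz_on_continuous_on)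
qed

lemma AE_zero_above_Sup_support:
  fixes p :: "real \<Rightarrow> real" and K :: real
  assumes [measurable]: "p \<in> borel_measurable borel"
    and nonneg: "\<And>u. 0 \<le> p u" and bounded: "\<And>u. p u \<le> K"
    and bdd: "bdd_above {u. \<forall>\<epsilon>>0. 0 < (\<integral>\<^sup>+v. ennreal (indicator {u-\<epsilon>..u} v * p v) \<partial>lborel)}"
      (is "bdd_above ?S")
  shows "AE u in lborel. Sup ?S < u \<longrightarrow> p u = 0"
proof -
  define s where "s = Sup ?S"
  define N where "N = density lborel p"
  define F where "F t = measure N {s<..t}" for t
  have "0 \<le> K"
    using nonneg[of 0] bounded[of 0] by linarith
  note add_le = measure_density_Ioc_add_le[OF assms(1) bounded \<open>0 \<le> K\<close>, folded N_def]
  have cont: "continuous_on {s..T} F" for T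
    unfolding F_def N_def
    by (rule continuous_on_subset[OF continuous_on_measure_density_Ioc[OF assms(1) bounded \<open>0 \<le> K\<close>]]) auto
  have mono: "mono_on {s..T} F" for T
  proof (rule mono_onI)
    show "F x \<le> F y" if "x \<in> {s..T}" "y \<in> {s..T}" "x \<le> y" for x y
      using add_le(1)[of s x y] that by (simp add: F_def)
  qed
  have F_eq_0: "F T = 0" if "s < T" for T
  proof (rule ccontr)
    assume "F T \<noteq> 0"
    then have "F s < F T"
      by (simp add: F_def zero_less_measure_iff)
    then obtain u where "s < u" "u \<le> T" and strict: "\<And>w. s \<le> w \<Longrightarrow> w < u \<Longrightarrow> F w < F u"
      using continuous_mono_obtain_left_strict_increase[OF less_imp_le[OF \<open>s < T\<close>] cont mono]
      by blast
    have "u \<in> ?S"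
    proof (intro CollectI allI impI)
      fix \<epsilon> :: real
      assume "\<epsilon> > 0"
      define w where "w = max (u - \<epsilon>) s"
      have "s \<le> w" "w < u"
        using \<open>\<epsilon> > 0\<close> \<open>s < u\<close> by (auto simp: w_def)
      then have "0 < measure N {w<..u}"
        using strict[OF \<open>s \<le> w\<close> \<open>w < u\<close>] add_le(1)[of s w u] by (simp add: F_def)
      then have "0 < emeasure N {w<..u}"
        by (simp add: measure_def enn2real_positive_iff)
      also have "\<dots> \<le> emeasure N {u-\<epsilon>..u}"
        by (intro emeasure_mono) (auto simp: w_def N_def)
      also have "\<dots> = (\<integral>\<^sup>+v. ennreal (p v) * indicator {u-\<epsilon>..u} v \<partial>lborel)"
        unfolding N_def by (rule emeasure_density) auto
      also have "\<dots> = (\<integral>\<^sup>+v. ennreal (indicator {u-\<epsilon>..u} v * p v) \<partial>lborel)"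
        by (intro nn_integral_cong) (simp add: indicator_def)
      finally show "0 < (\<integral>\<^sup>+v. ennreal (indicator {u-\<epsilon>..u} v * p v) \<partial>lborel)" .
    qed
    then have "u \<le> s"
      unfolding s_def using bdd by (rule cSup_upper)
    then show False
      using \<open>s < u\<close> by simp
  qed
  have "emeasure N {s<..s + Suc n} = 0" for n
  proof -
    have "emeasure N {s<..s + Suc n} \<le> ennreal (K * Suc n)"
      using emeasure_density_Ioc_le[OF assms(1) bounded \<open>0 \<le> K\<close>, of s "s + Suc n"]
      by (simp add: N_def)
    then have "emeasure N {s<..s + Suc n} \<noteq> \<infinity>"
      using le_less_trans[OF _ ennreal_less_top] by force
    moreover have "measure N {s<..s + Suc n} = 0"
      using F_eq_0[of "s + Suc n"] by (simp add: F_def)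
    ultimately show ?thesis
      by (simp add: measure_def enn2real_eq_0_iff)
  qed
  then have "emeasure N (\<Union>n. {s<..s + Suc n}) = 0"
    by (rule emeasure_UN_eq_0) (auto simp: N_def)
  moreover have "(\<Union>n. {s<..s + Suc n}) = {s<..}"
  proof (intro equalityI subsetI)
    fix x
    assume "x \<in> {s<..}"
    moreover obtain n :: nat where "x - s \<le> n"
      using real_arch_simple by blast
    ultimately show "x \<in> (\<Union>n. {s<..s + Suc n})"
      by (auto intro!: exI[of _ n])
  qed auto
  ultimately have "{s<..} \<in> null_sets N"
    by (simp add: null_sets_def N_def)
  then have "AE u in lborel. s < u \<longrightarrow> ennreal (p u) = 0"
    by (simp add: N_def null_sets_density_iff)
  then show ?thesis
  proof (rule eventually_mono, intro impI)
    fix u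
    assume "s < u \<longrightarrow> ennreal (p u) = 0" and "Sup ?S < u"
    then show "p u = 0"
      using nonneg[of u] by (simp add: s_def)
  qed
qed

definition gamma_kernel :: "real \<Rightarrow> real \<Rightarrow> real \<Rightarrow> real" where
  "gamma_kernel s b t = indicator {0<..} t * (t powr b * exp (- t / s))"

lemma gamma_kernel_nonneg: "0 \<le> gamma_kernel s b t"
  by (simp add: gamma_kernel_def)

lemma borel_measurable_gamma_kernel [measurable]: "gamma_kernel s b \<in> borel_measurable borel"
  unfolding gamma_kernel_def by measurable

lemma nn_integral_gamma_kernel:
  fixes s b :: real
  assumes "0 < s" "-1 < b"
  shows "(\<integral>\<^sup>+t. ennreal (gamma_kernel s b t) \<partial>lborel) = ennreal (s powr (b + 1) * Gamma (b + 1))"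
proof -
  have "(\<integral>\<^sup>+t. ennreal (gamma_kernel s b t) \<partial>lborel)
      = ennreal \<bar>s\<bar> * (\<integral>\<^sup>+x. ennreal (gamma_kernel s b (0 + s * x)) \<partial>lborel)"
    using assms by (intro nn_integral_real_affine) auto
  also have "(\<integral>\<^sup>+x. ennreal (gamma_kernel s b (0 + s * x)) \<partial>lborel)
      = (\<integral>\<^sup>+x. ennreal (s powr b) * ennreal (indicator {0..} x * x powr (b + 1 - 1) / exp x) \<partial>lborel)"
  proof (intro nn_integral_cong)
    fix x :: real
    show "ennreal (gamma_kernel s b (0 + s * x))
        = ennreal (s powr b) * ennreal (indicator {0..} x * x powr (b + 1 - 1) / exp x)"
      using assms
      by (cases "0 < x")
         (auto simp: gamma_kernel_def indicator_def zero_less_mult_iff powr_mult exp_minus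
               field_simps simp flip: ennreal_mult)
  qed
  also have "\<dots> = ennreal (s powr b) * ennreal (Gamma (b + 1))"
    using assms by (subst nn_integral_cmult) (auto simp: Gamma_conv_nn_integral_real)
  finally show ?thesis
    using assms by (simp add: powr_add mult_ac flip: ennreal_mult)
qed

lemma integrable_gamma_kernel:
  assumes "0 < s" "-1 < b"
  shows "integrable lborel (gamma_kernel s b)"
  using nn_integral_gamma_kernel[OF assms] gamma_kernel_nonneg
  by (intro integrableI_nonneg) auto

lemma integral_gamma_kernel:
  assumes "0 < s" "-1 < b"
  shows "integral\<^sup>L lborel (gamma_kernel s b) = s powr (b + 1) * Gamma (b + 1)"
  using assms nn_integral_gamma_kernel[OF assms] gamma_kernel_nonneg
  by (subst integral_eq_nn_integral) auto

text \<open>Up to normalisation, the density of \<open>n (s - U)\<close> when \<open>U\<close> has density proportional to \<open>u\<^sup>n p u\<close> and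
  \<open>p\<close> vanishes beyond \<open>s\<close>; the factor \<open>n\<^sup>b\<close> makes the limit as \<open>n \<rightarrow> \<infinity>\<close> nondegenerate.\<close>

definition rescaled_profile :: "(real \<Rightarrow> real) \<Rightarrow> real \<Rightarrow> real \<Rightarrow> nat \<Rightarrow> real \<Rightarrow> real" where
  "rescaled_profile p s b n t = indicator {0<..} t * (real n powr b * ((s - t / n) / s) ^ n * p (s - t / n))"

lemma borel_measurable_rescaled_profile [measurable]:
  assumes [measurable]: "p \<in> borel_measurable borel"
  shows "rescaled_profile p s b n \<in> borel_measurable borel"
  unfolding rescaled_profile_def by measurable

lemma rescaled_profile_nonneg:
  assumes "\<And>u. 0 \<le> p u" "\<And>u. u < 0 \<Longrightarrow> p u = 0" "0 < s"
  shows "0 \<le> rescaled_profile p s b n t"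
  using assms by (cases "s - t / n < 0") (auto simp: rescaled_profile_def)

lemma powr_times_profile_le:
  fixes p :: "real \<Rightarrow> real"
  assumes nonneg: "\<And>u. 0 \<le> p u" and bounded: "\<And>u. p u \<le> K"
    and near: "\<And>y. s - \<delta> < y \<Longrightarrow> y < s \<Longrightarrow> p y \<le> c * (s - y) powr b"
    and "0 < \<delta>" "0 < s" "0 \<le> c" "0 < t" "0 < n" "t / n \<le> s"
  shows "real n powr b * p (s - t / n) \<le> (c + K / \<delta> powr b + K / s powr b) * t powr b"
proof (cases "t / n < \<delta>")
  case True
  have "0 \<le> K"
    using nonneg[of 0] bounded[of 0] by linarith
  have "real n powr b * p (s - t / n) \<le> real n powr b * (c * (t / n) powr b)"
    using True assms near[of "s - t / n"] by (intro mult_left_mono) auto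
  also have "\<dots> = c * t powr b"
    using assms by (simp add: powr_divide)
  also have "\<dots> \<le> (c + K / \<delta> powr b + K / s powr b) * t powr b"
    using \<open>0 \<le> K\<close> by (intro mult_right_mono) auto
  finally show ?thesis .
next
  case False
  have "real n powr b \<le> (t / \<delta>) powr b + (t / s) powr b"
  proof (cases "0 \<le> b")
    case True
    have "real n \<le> t / \<delta>"
      using False assms by (simp add: field_simps)
    then have "real n powr b \<le> (t / \<delta>) powr b"
      using True by (intro powr_mono2) auto
    then show ?thesis
      by (simp add: add_increasing2)
  next
    case False
    have "t / s \<le> real n"
      using assms by (simp add: field_simps)
    then have "real n powr b \<le> (t / s) powr b"
      using False assms by (intro powr_mono2') auto
    then show ?thesis
      by (simp add: add_increasing)
  qed
  also have "\<dots> = t powr b / \<delta> powr b + t powr b / s powr b"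
    using assms by (simp add: powr_divide)
  finally have "real n powr b * p (s - t / n) \<le> (t powr b / \<delta> powr b + t powr b / s powr b) * K"
    using mult_mono[OF _ bounded] nonneg by simp
  also have "\<dots> = (K / \<delta> powr b + K / s powr b) * t powr b"
    by (simp add: field_simps)
  also have "\<dots> \<le> (c + K / \<delta> powr b + K / s powr b) * t powr b"
    using \<open>0 \<le> c\<close> by (simp add: distrib_right)
  finally show ?thesis .
qed

lemma power_shrink_le_exp:
  fixes s t :: real
  assumes "0 < s" "0 < n" "t / n \<le> s"
  shows "((s - t / n) / s) ^ n \<le> exp (- t / s)"
proof -
  have "(s - t / n) / s = 1 - (t / s) / n"
    using assms by (simp add: field_simps)
  moreover have "(1 - (t / s) / n) ^ n \<le> exp (- (t / s))"
    using assms by (intro exp_ge_one_minus_x_over_n_power_n) (auto simp: field_simps)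
  ultimately show ?thesis
    by simp
qed

lemma rescaled_profile_le:
  fixes p :: "real \<Rightarrow> real"
  assumes nonneg: "\<And>u. 0 \<le> p u" and bounded: "\<And>u. p u \<le> K"
    and vanish: "\<And>u. u < 0 \<Longrightarrow> p u = 0"
    and asym: "p \<sim>[at_left s] (\<lambda>u. a * (s - u) powr b)" and "0 < s"
  obtains C where "\<And>n t. \<bar>rescaled_profile p s b n t\<bar> \<le> C * gamma_kernel s b t"
proof -
  have "\<forall>\<^sub>F y in at_left s. norm (p y) \<le> 2 * norm (a * (s - y) powr b)"
    using asymp_equiv_imp_eventually_le[OF asym] by simp
  then obtain y0 where "y0 < s" and near0: "\<And>y. y0 < y \<Longrightarrow> y < s \<Longrightarrow> \<bar>p y\<bar> \<le> 2 * \<bar>a * (s - y) powr b\<bar>"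
    unfolding eventually_at_left_field by auto
  define \<delta> where "\<delta> = s - y0"
  have "0 < \<delta>"
    using \<open>y0 < s\<close> by (simp add: \<delta>_def)
  have near: "p y \<le> 2 * \<bar>a\<bar> * (s - y) powr b" if "s - \<delta> < y" "y < s" for y
    using near0[of y] that by (simp add: \<delta>_def abs_mult)
  define C where "C = 2 * \<bar>a\<bar> + K / \<delta> powr b + K / s powr b"
  have "\<bar>rescaled_profile p s b n t\<bar> \<le> C * gamma_kernel s b t" for n t
  proof (cases "0 < t \<and> 0 < n \<and> t / n \<le> s")
    case False
    then have "rescaled_profile p s b n t = 0"
      using vanish[of "s - t / n"] by (auto simp: rescaled_profile_def)
    moreover have "0 \<le> C * gamma_kernel s b t"
      using nonneg[of 0] bounded[of 0] by (simp add: C_def gamma_kernel_def)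
    ultimately show ?thesis
      by simp
  next
    case True
    have q: "((s - t / n) / s) ^ n \<le> exp (- t / s)"
      using True \<open>0 < s\<close> by (intro power_shrink_le_exp) auto
    have np: "real n powr b * p (s - t / n) \<le> C * t powr b"
      unfolding C_def using True \<open>0 < s\<close> \<open>0 < \<delta>\<close>
      by (intro powr_times_profile_le[OF nonneg bounded near]) auto
    have "((s - t / n) / s) ^ n * (real n powr b * p (s - t / n)) \<le> exp (- t / s) * (C * t powr b)"
      using mult_mono[OF q np] nonneg by simp
    then show ?thesis
      using True nonneg \<open>0 < s\<close> by (simp add: rescaled_profile_def gamma_kernel_def abs_mult mult_ac)
  qed
  then show ?thesis
    using that by blast
qed

lemma rescaled_profile_tendsto:
  fixes p :: "real \<Rightarrow> real"
  assumes asym: "p \<sim>[at_left s] (\<lambda>u. a * (s - u) powr b)" and "0 < s"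
  shows "(\<lambda>n. rescaled_profile p s b n t) \<longlonglongrightarrow> a * gamma_kernel s b t"
proof (cases "0 < t")
  case False
  then show ?thesis
    by (simp add: rescaled_profile_def gamma_kernel_def)
next
  case True
  have "filterlim (\<lambda>n::nat. s - t / n) (at_left s) sequentially"
  proof (rule tendsto_imp_filterlim_at_left)
    show "(\<lambda>n::nat. s - t / n) \<longlonglongrightarrow> s"
      using tendsto_diff[OF tendsto_const lim_const_over_n[of t]] by simp
    show "\<forall>\<^sub>F n in sequentially. s - t / real n < s"
      using True by (auto simp: eventually_sequentially intro!: exI[of _ 1])
  qed
  from asymp_equiv_compose'[OF asym this]
  have "(\<lambda>n::nat. p (s - t / n)) \<sim>[sequentially] (\<lambda>n. a * (t / n) powr b)"
    by simp
  then have "(\<lambda>n::nat. real n powr b * p (s - t / n)) \<sim>[sequentially] (\<lambda>n. real n powr b * (a * (t / n) powr b))"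
    by (intro asymp_equiv_intros)
  also have "\<dots> \<sim>[sequentially] (\<lambda>_. a * t powr b)"
    using True
    by (intro asymp_equiv_refl_ev) (auto simp: eventually_sequentially powr_divide intro!: exI[of _ 1])
  finally have "(\<lambda>n::nat. real n powr b * p (s - t / n)) \<longlonglongrightarrow> a * t powr b"
    by (rule asymp_equivD_const)
  with tendsto_exp_limit_sequentially[of "- t / s"]
  have "(\<lambda>n. (1 + (- t / s) / real n) ^ n * (real n powr b * p (s - t / n))) \<longlonglongrightarrow> exp (- t / s) * (a * t powr b)"
    by (rule tendsto_mult)
  moreover have "\<forall>\<^sub>F n in sequentially. (1 + (- t / s) / real n) ^ n * (real n powr b * p (s - t / n)) = rescaled_profile p s b n t"
    using True \<open>0 < s\<close>
    by (auto simp: eventually_sequentially rescaled_profile_def field_simps intro!: exI[of _ 1])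
  ultimately show ?thesis
    using True by (auto simp: gamma_kernel_def mult_ac elim: Lim_transform_eventually)
qed

lemma rescaled_profile_integral_tendsto:
  fixes p :: "real \<Rightarrow> real"
  assumes [measurable]: "p \<in> borel_measurable borel" "A \<in> sets borel"
    and nonneg: "\<And>u. 0 \<le> p u" and bounded: "\<And>u. p u \<le> K"
    and vanish: "\<And>u. u < 0 \<Longrightarrow> p u = 0"
    and asym: "p \<sim>[at_left s] (\<lambda>u. a * (s - u) powr b)" and "0 < s" "-1 < b"
  shows "(\<lambda>n. \<integral>t. indicator A t * rescaled_profile p s b n t \<partial>lborel)
           \<longlonglongrightarrow> a * (\<integral>t. indicator A t * gamma_kernel s b t \<partial>lborel)"
    and "integrable lborel (\<lambda>t. indicator A t * rescaled_profile p s b n t)"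
proof -
  obtain C where le: "\<And>n t. \<bar>rescaled_profile p s b n t\<bar> \<le> C * gamma_kernel s b t"
    using rescaled_profile_le[OF nonneg bounded vanish asym \<open>0 < s\<close>] by blast
  have dominated: "integrable lborel (\<lambda>t. C * gamma_kernel s b t)"
    using integrable_gamma_kernel[OF \<open>0 < s\<close> \<open>-1 < b\<close>] by simp
  have bound: "AE t in lborel. norm (indicator A t * rescaled_profile p s b n t) \<le> C * gamma_kernel s b t" for n
  proof (intro AE_I2)
    fix t
    show "norm (indicator A t * rescaled_profile p s b n t) \<le> C * gamma_kernel s b t"
      using le[of n t] abs_ge_zero[of "rescaled_profile p s b n t"] by (cases "t \<in> A") auto
  qed
  have lim: "AE t in lborel. (\<lambda>n. indicator A t * rescaled_profile p s b n t) \<longlonglongrightarrow> indicator A t * (a * gamma_kernel s b t)"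
    using rescaled_profile_tendsto[OF asym \<open>0 < s\<close>] by (simp add: tendsto_mult_left)
  have meas: "(\<lambda>t. indicator A t * (a * gamma_kernel s b t)) \<in> borel_measurable lborel"
    "\<And>n. (\<lambda>t. indicator A t * rescaled_profile p s b n t) \<in> borel_measurable lborel"
    by measurable
  show "integrable lborel (\<lambda>t. indicator A t * rescaled_profile p s b n t)"
    by (rule integrable_dominated_convergence2[OF meas dominated lim bound])
  have "(\<lambda>t. indicator A t * (a * gamma_kernel s b t)) = (\<lambda>t. a * (indicator A t * gamma_kernel s b t))"
    by (rule ext) (rule mult.left_commute)
  with integral_dominated_convergence[OF meas dominated lim bound]
  show "(\<lambda>n. \<integral>t. indicator A t * rescaled_profile p s b n t \<partial>lborel)
           \<longlonglongrightarrow> a * (\<integral>t. indicator A t * gamma_kernel s b t \<partial>lborel)"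
    by simp
qed

lemma gamma_density_eq_gamma_kernel:
  assumes "0 < s"
  shows "gamma_density (b + 1) (1 / s) t = gamma_kernel s b t / (s powr (b + 1) * Gamma (b + 1))"
  using assms by (simp add: gamma_density_def gamma_kernel_def powr_divide exp_minus field_simps)

lemma cdf_gamma_measure:
  assumes "0 < s" "-1 < b"
  shows "cdf (gamma_measure (b + 1) (1 / s)) x
           = (\<integral>t. indicator {..x} t * gamma_kernel s b t \<partial>lborel) / integral\<^sup>L lborel (gamma_kernel s b)"
proof -
  define Z where "Z = s powr (b + 1) * Gamma (b + 1)"
  have "0 < Z"
    using assms by (simp add: Z_def Gamma_real_pos)
  have "gamma_measure (b + 1) (1 / s) = density lborel (\<lambda>t. ennreal (gamma_kernel s b t / Z))"
    using assms by (simp add: gamma_measure_def gamma_density_eq_gamma_kernel Z_def)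
  then have "cdf (gamma_measure (b + 1) (1 / s)) x
      = enn2real (\<integral>\<^sup>+t. ennreal (indicator {..x} t * gamma_kernel s b t / Z) \<partial>lborel)"
    unfolding cdf_def measure_def
    by (simp add: emeasure_density indicator_mult_ennreal mult.commute)
  also have "\<dots> = (\<integral>t. indicator {..x} t * gamma_kernel s b t / Z \<partial>lborel)"
    using integrable_real_mult_indicator[OF _ integrable_gamma_kernel[OF assms], of "{..x}"] \<open>0 < Z\<close>
    by (subst nn_integral_eq_integral) (auto simp: gamma_kernel_nonneg mult.commute)
  finally show ?thesis
    using integral_gamma_kernel[OF assms] by (simp add: Z_def)
qed

locale radial_profile =
  fixes \<psi> :: "real \<Rightarrow> real" and a b :: real
  assumes psi_measurable: "set_borel_measurable borel {0..} \<psi>"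
    and psi_nonneg: "\<And>u. 0 \<le> u \<Longrightarrow> 0 \<le> \<psi> u"
    and psi_moment_1_pos: "0 < psi_moment \<psi> 1"
    and bdd_above_ustar_set: "bdd_above (ustar_set \<psi>)"
    and psi_bounded: "bounded (\<psi> ` {0..})"
    and a_pos: "0 < a" and b_gt: "-1 < b"
    and psi_asymp: "\<psi> \<sim>[at_left (ustar \<psi>)] (\<lambda>u. a * (ustar \<psi> - u) powr b)"
begin

definition profile :: "real \<Rightarrow> real" where
  "profile u = indicator {0..} u * \<psi> u"

lemma profile_measurable [measurable]: "profile \<in> borel_measurable borel"
  using psi_measurable unfolding profile_def[abs_def] set_borel_measurable_def by simp

lemma profile_nonneg: "0 \<le> profile u"
  by (simp add: profile_def psi_nonneg indicator_def)

lemma profile_eq_0_neg: "u < 0 \<Longrightarrow> profile u = 0"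
  by (simp add: profile_def)

lemma profile_bounded:
  obtains K where "\<And>u. profile u \<le> K"
proof -
  obtain K where "\<And>x. x \<in> \<psi> ` {0..} \<Longrightarrow> \<bar>x\<bar> \<le> K"
    using psi_bounded unfolding bounded_real by blast
  then have "profile u \<le> K" for u
    using order_trans[OF abs_ge_zero, of "\<psi> 0" K] by (force simp: profile_def indicator_def)
  then show ?thesis
    using that by blast
qed

lemma AE_profile_eq_0_above_ustar: "AE u in lborel. ustar \<psi> < u \<longrightarrow> profile u = 0"
proof -
  have "indicator ({u - \<epsilon>..u} \<inter> {0..}) v * \<psi> v = indicator {u - \<epsilon>..u} v * profile v" for u \<epsilon> v :: real
    by (auto simp: profile_def indicator_def)
  then have "ustar_set \<psi> = {u. \<forall>\<epsilon>>0. 0 < (\<integral>\<^sup>+v. ennreal (indicator {u - \<epsilon>..u} v * profile v) \<partial>lborel)}"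
    by (simp add: ustar_set_def)
  moreover obtain K where "\<And>u. profile u \<le> K"
    using profile_bounded by blast
  ultimately show ?thesis
    using AE_zero_above_Sup_support[OF profile_measurable profile_nonneg, of K] bdd_above_ustar_set
    by (simp add: ustar_def)
qed

text \<open>\<open>c\<^sub>d \<cdot> deviation_mass d B\<close> is the probability that \<open>d (u\<^sub>* - U\<^sub>d) \<in> B\<close>.\<close>

definition deviation_mass :: "nat \<Rightarrow> real set \<Rightarrow> ennreal" where
  "deviation_mass d B = (\<integral>\<^sup>+u. ennreal (indicator B ((ustar \<psi> - u) * d) * (u ^ d * profile u)) \<partial>lborel)"

lemma psi_moment_eq_deviation_mass: "psi_moment \<psi> d = deviation_mass d UNIV"
  by (simp add: psi_moment_def deviation_mass_def profile_def mult_ac)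

lemma ustar_pos: "0 < ustar \<psi>"
proof (rule ccontr)
  assume "\<not> 0 < ustar \<psi>"
  have vanish: "u * profile u = 0" if "ustar \<psi> < u \<longrightarrow> profile u = 0" for u
    using that \<open>\<not> 0 < ustar \<psi>\<close> profile_eq_0_neg[of u] by (cases "u < 0") auto
  have "AE u in lborel. ennreal (u * profile u) = 0"
    using AE_profile_eq_0_above_ustar by (rule AE_mp) (auto intro!: AE_I2 simp: vanish)
  then have "psi_moment \<psi> 1 = 0"
    by (simp add: psi_moment_eq_deviation_mass deviation_mass_def nn_integral_0_iff_AE)
  then show False
    using psi_moment_1_pos by simp
qed

lemma profile_asymp: "profile \<sim>[at_left (ustar \<psi>)] (\<lambda>u. a * (ustar \<psi> - u) powr b)"
proof (rule asymp_equiv_transfer[OF psi_asymp])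
  show "\<forall>\<^sub>F u in at_left (ustar \<psi>). \<psi> u = profile u"
    using ustar_pos unfolding eventually_at_left_field
    by (auto simp: profile_def intro!: exI[of _ 0])
qed simp

definition rescaled_mass :: "nat \<Rightarrow> real set \<Rightarrow> real" where
  "rescaled_mass d B = (\<integral>t. indicator B t * rescaled_profile profile (ustar \<psi>) b d t \<partial>lborel)"

lemma rescaled_mass_tendsto:
  assumes "B \<in> sets borel"
  shows "(\<lambda>d. rescaled_mass d B) \<longlonglongrightarrow> a * (\<integral>t. indicator B t * gamma_kernel (ustar \<psi>) b t \<partial>lborel)"
    and "integrable lborel (\<lambda>t. indicator B t * rescaled_profile profile (ustar \<psi>) b d t)"
proof -
  obtain K where "\<And>u. profile u \<le> K"
    using profile_bounded by blast
  note rescaled_profile_integral_tendsto[OF profile_measurable assms profile_nonneg this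
      profile_eq_0_neg profile_asymp ustar_pos b_gt]
  then show "(\<lambda>d. rescaled_mass d B) \<longlonglongrightarrow> a * (\<integral>t. indicator B t * gamma_kernel (ustar \<psi>) b t \<partial>lborel)"
    and "integrable lborel (\<lambda>t. indicator B t * rescaled_profile profile (ustar \<psi>) b d t)"
    by (simp_all add: rescaled_mass_def)
qed

lemma rescaled_mass_nonneg: "0 \<le> rescaled_mass d B"
  unfolding rescaled_mass_def
  using rescaled_profile_nonneg[OF profile_nonneg profile_eq_0_neg ustar_pos]
  by (intro integral_nonneg_AE) (simp add: indicator_def)

lemma deviation_mass_eq_rescaled_mass:
  assumes "0 < d" and [measurable]: "B \<in> sets borel"
  shows "ennreal (real d powr (b + 1) / ustar \<psi> ^ d) * deviation_mass d B = ennreal (rescaled_mass d B)"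
proof -
  define s where "s = ustar \<psi>"
  define g where "g t = indicator B t * indicator {0<..} t * ((s - t / d) ^ d * profile (s - t / d))" for t
  have "0 < s"
    using ustar_pos by (simp add: s_def)
  have "AE u in lborel. ennreal (indicator B ((s - u) * d) * (u ^ d * profile u))
      = ennreal (indicator B ((s - u) * d) * indicator {..<s} u * (u ^ d * profile u))"
    using AE_profile_eq_0_above_ustar AE_lborel_singleton[of s]
    by eventually_elim (auto simp: indicator_def s_def)
  then have "deviation_mass d B
      = (\<integral>\<^sup>+u. ennreal (indicator B ((s - u) * d) * indicator {..<s} u * (u ^ d * profile u)) \<partial>lborel)"
    unfolding deviation_mass_def s_def by (rule nn_integral_cong_AE)
  also have "\<dots> = ennreal \<bar>-1 / real d\<bar> * (\<integral>\<^sup>+t. ennreal (indicator B ((s - (s + (-1 / real d) * t)) * d)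
      * indicator {..<s} (s + (-1 / real d) * t) * ((s + (-1 / real d) * t) ^ d * profile (s + (-1 / real d) * t))) \<partial>lborel)"
    using \<open>0 < d\<close> by (intro nn_integral_real_affine) auto
  also have "\<dots> = ennreal (1 / d) * (\<integral>\<^sup>+t. ennreal (g t) \<partial>lborel)"
    using \<open>0 < d\<close> by (auto simp: g_def indicator_def field_simps intro!: nn_integral_cong)
  finally have "ennreal (real d powr (b + 1) / s ^ d) * deviation_mass d B
      = ennreal (real d powr (b + 1) / s ^ d) * ennreal (1 / d) * (\<integral>\<^sup>+t. ennreal (g t) \<partial>lborel)"
    by (simp add: mult.assoc)
  also have "ennreal (real d powr (b + 1) / s ^ d) * ennreal (1 / d) = ennreal (real d powr b / s ^ d)"
    using \<open>0 < d\<close> \<open>0 < s\<close> by (simp add: powr_add flip: ennreal_mult)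
  also have "\<dots> * (\<integral>\<^sup>+t. ennreal (g t) \<partial>lborel)
      = (\<integral>\<^sup>+t. ennreal (real d powr b / s ^ d) * ennreal (g t) \<partial>lborel)"
    by (rule nn_integral_cmult[symmetric]) (simp add: g_def)
  also have "\<dots> = (\<integral>\<^sup>+t. ennreal (indicator B t * rescaled_profile profile s b d t) \<partial>lborel)"
    using \<open>0 < s\<close> profile_eq_0_neg[of "s - _ / d"]
    by (intro nn_integral_cong)
       (auto simp: g_def rescaled_profile_def indicator_def power_divide field_simps
             simp flip: ennreal_mult')
  also have "\<dots> = ennreal (rescaled_mass d B)"
    unfolding rescaled_mass_def s_def
    using rescaled_mass_tendsto(2)[OF assms(2)] rescaled_profile_nonneg[OF profile_nonneg profile_eq_0_neg ustar_pos]
    by (intro nn_integral_eq_integral) (auto simp: indicator_def)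
  finally show ?thesis
    by (simp add: s_def)
qed

lemma cdf_scaled_deviation:
  assumes "0 < d" and law: "distributed M lborel X (\<lambda>u. ennreal (U_density \<psi> d u))"
  shows "cdf (distr M borel (\<lambda>\<omega>. real d * (ustar \<psi> - X \<omega>))) x = rescaled_mass d {..x} / rescaled_mass d UNIV"
proof -
  define s where "s = ustar \<psi>"
  define c where "c = c_const \<psi> d"
  define \<kappa> where "\<kappa> = real d powr (b + 1) / s ^ d"
  have [measurable]: "X \<in> borel_measurable M"
    using law by (simp add: distributed_def)
  have "0 \<le> c" "0 < \<kappa>"
    using ustar_pos \<open>0 < d\<close> by (simp_all add: c_def c_const_def \<kappa>_def s_def)
  have mass: "enn2real (deviation_mass d B) = rescaled_mass d B / \<kappa>" if "B \<in> sets borel" for B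
  proof -
    have "\<kappa> * enn2real (deviation_mass d B) = enn2real (ennreal \<kappa> * deviation_mass d B)"
      using \<open>0 < \<kappa>\<close> by (simp add: enn2real_mult)
    also have "\<dots> = rescaled_mass d B"
      using deviation_mass_eq_rescaled_mass[OF \<open>0 < d\<close> that] rescaled_mass_nonneg
      by (simp add: \<kappa>_def s_def)
    finally show ?thesis
      using \<open>0 < \<kappa>\<close> by (simp add: field_simps)
  qed
  define A where "A = {u. (s - u) * d \<le> x}"
  have "A \<in> sets lborel"
    unfolding A_def by measurable
  have "cdf (distr M borel (\<lambda>\<omega>. real d * (s - X \<omega>))) x = measure M (X -` A \<inter> space M)"
    unfolding cdf_def A_def by (subst measure_distr) (auto intro!: arg_cong2[where f = measure] simp: mult.commute)
  also have "\<dots> = enn2real (\<integral>\<^sup>+u. ennreal (U_density \<psi> d u) * indicator A u \<partial>lborel)"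
    unfolding measure_def using distributed_emeasure[OF law \<open>A \<in> sets lborel\<close>] by simp
  also have "(\<integral>\<^sup>+u. ennreal (U_density \<psi> d u) * indicator A u \<partial>lborel)
      = (\<integral>\<^sup>+u. ennreal c * ennreal (indicator {..x} ((s - u) * d) * (u ^ d * profile u)) \<partial>lborel)"
  proof (rule nn_integral_cong)
    fix u
    have "ennreal (U_density \<psi> d u) * indicator A u = ennreal (U_density \<psi> d u * indicator A u)"
      by (cases "u \<in> A") simp_all
    also have "U_density \<psi> d u * indicator A u = c * (indicator {..x} ((s - u) * d) * (u ^ d * profile u))"
      by (simp add: U_density_def A_def c_def profile_def indicator_def)
    also have "ennreal \<dots> = ennreal c * ennreal (indicator {..x} ((s - u) * d) * (u ^ d * profile u))"
      using \<open>0 \<le> c\<close> by (rule ennreal_mult')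
    finally show "ennreal (U_density \<psi> d u) * indicator A u
        = ennreal c * ennreal (indicator {..x} ((s - u) * d) * (u ^ d * profile u))" .
  qed
  also have "\<dots> = ennreal c * deviation_mass d {..x}"
    unfolding deviation_mass_def s_def by (rule nn_integral_cmult) simp
  also have "c = 1 / enn2real (deviation_mass d UNIV)"
    by (simp add: c_def c_const_def psi_moment_eq_deviation_mass)
  finally have "cdf (distr M borel (\<lambda>\<omega>. real d * (s - X \<omega>))) x
      = enn2real (deviation_mass d {..x}) / enn2real (deviation_mass d UNIV)"
    by (simp add: enn2real_mult)
  also have "\<dots> = (rescaled_mass d {..x} / \<kappa>) / (rescaled_mass d UNIV / \<kappa>)"
    by (simp add: mass)
  also have "\<dots> = rescaled_mass d {..x} / rescaled_mass d UNIV"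
    using \<open>0 < \<kappa>\<close> by (simp add: divide_divide_eq_left)
  finally show ?thesis
    by (simp add: s_def)
qed

lemma weak_conv_scaled_deviation:
  assumes "\<And>d. 1 \<le> d \<Longrightarrow> distributed (M d) lborel (X d) (\<lambda>u. ennreal (U_density \<psi> d u))"
  shows "weak_conv_m (\<lambda>d. distr (M d) borel (\<lambda>\<omega>. real d * (ustar \<psi> - X d \<omega>)))
           (gamma_measure (b + 1) (1 / ustar \<psi>))"
  unfolding weak_conv_m_def weak_conv_def
proof (intro allI impI)
  fix x :: real
  define G where "G B = (\<integral>t. indicator B t * gamma_kernel (ustar \<psi>) b t \<partial>lborel)" for B
  have "0 < G UNIV"
    using integral_gamma_kernel[OF ustar_pos b_gt] ustar_pos b_gt by (simp add: G_def Gamma_real_pos)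
  moreover have "(\<lambda>d. rescaled_mass d B) \<longlonglongrightarrow> a * G B" if "B \<in> {{..x}, UNIV}" for B
    using rescaled_mass_tendsto(1)[of B] that by (auto simp: G_def)
  ultimately have "(\<lambda>d. rescaled_mass d {..x} / rescaled_mass d UNIV) \<longlonglongrightarrow> (a * G {..x}) / (a * G UNIV)"
    using a_pos by (intro tendsto_divide) auto
  moreover have "\<forall>\<^sub>F d in sequentially. rescaled_mass d {..x} / rescaled_mass d UNIV
      = cdf (distr (M d) borel (\<lambda>\<omega>. real d * (ustar \<psi> - X d \<omega>))) x"
    unfolding eventually_sequentially
    using cdf_scaled_deviation[OF _ assms] by (intro exI[of _ 1]) simp
  moreover have "(a * G {..x}) / (a * G UNIV) = cdf (gamma_measure (b + 1) (1 / ustar \<psi>)) x"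
    using cdf_gamma_measure[OF ustar_pos b_gt] a_pos by (simp add: G_def)
  ultimately show "(\<lambda>d. cdf (distr (M d) borel (\<lambda>\<omega>. real d * (ustar \<psi> - X d \<omega>))) x)
      \<longlonglongrightarrow> cdf (gamma_measure (b + 1) (1 / ustar \<psi>)) x"
    by (simp add: Lim_transform_eventually)
qed

end

theorem theorem2:
  fixes \<psi> :: "real \<Rightarrow> real" and a b :: real
    and M :: "nat \<Rightarrow> 'a measure" and U :: "nat \<Rightarrow> 'a \<Rightarrow> real"
  assumes meas: "set_borel_measurable borel {0..} \<psi>"
    and nonneg: "\<And>u. u \<ge> 0 \<Longrightarrow> \<psi> u \<ge> 0"
    and moments: "\<And>d. d \<ge> 1 \<Longrightarrow> 0 < psi_moment \<psi> d \<and> psi_moment \<psi> d < \<infinity>"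
    and law: "\<And>d. d \<ge> 1 \<Longrightarrow> prob_space (M d) \<and> distributed (M d) lborel (U d) (\<lambda>u. ennreal (U_density \<psi> d u))"
    and ustar_fin: "bdd_above (ustar_set \<psi>)"
    and bounded: "bounded (\<psi> ` {0..})"
    and a_pos: "a > 0" and b_gt: "b > -1"
    and asym: "\<psi> \<sim>[at_left (ustar \<psi>)] (\<lambda>u. a * (ustar \<psi> - u) powr b)"
  shows "weak_conv_m (\<lambda>d. distr (M d) borel (\<lambda>\<omega>. real d * (ustar \<psi> - U d \<omega>)))
           (gamma_measure (b + 1) (1 / ustar \<psi>))"
proof -
  interpret radial_profile \<psi> a b
    using meas nonneg moments[of 1] ustar_fin bounded a_pos b_gt asym by unfold_locales auto
  show ?thesis
    using law by (intro weak_conv_scaled_deviation) auto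
qed

end
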